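(* Let $n\ge2$ and suppose $(y,z)$ is a $C^1$ solution with $y,z>0$ on $[0,\infty)$ of \[\dot y=z^2(n+1-y)-ny,\qquad \dot z=\tfrac{n+1}{n}z(n-1+y)-(n+z^2)z,\] such that $(y,z)\to(0,0)$ as $t\to\infty$. Then $\dfrac{z^2}{y}\to\dfrac{n^2-2}{n(n+1)}$ as $t\to\infty$. *)

theory Defs
  imports "HOL-Analysis.Analysis"
begin

end

theory Submission
  imports Defs
begin

text \<open>The quotient \<open>v = y / z\<^sup>2\<close> satisfies the linear equation \<open>v' = p - q v\<close> with
  \<open>p = n + 1 - y \<longrightarrow> n + 1\<close> and \<open>q = (n\<^sup>2 - 2) / n + 2 (n + 1) y / n - 2 z\<^sup>2 \<longrightarrow> (n\<^sup>2 - 2) / n\<close>,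
  which is positive because \<open>n \<ge> 2\<close>. A linear equation with \<open>p \<longrightarrow> P\<close> and \<open>q \<longrightarrow> Q > 0\<close>
  forces \<open>v \<longrightarrow> P / Q\<close>: above the level \<open>P / Q + \<epsilon>\<close> the derivative is eventually bounded
  by a negative constant, so \<open>v\<close> is driven below that level and can never cross it again;
  symmetrically from below. Hence \<open>y / z\<^sup>2 \<longrightarrow> n (n + 1) / (n\<^sup>2 - 2)\<close>.\<close>

lemma reaches_level_of_deriv_le_neg:
  fixes f f' :: "real \<Rightarrow> real"
  assumes der: "\<And>t. t \<ge> T \<Longrightarrow> (f has_real_derivative f' t) (at t)"
    and c: "c > 0"
    and slope: "\<And>t. t \<ge> T \<Longrightarrow> f t \<ge> \<eta> \<Longrightarrow> f' t \<le> - c"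
  shows "\<exists>t\<ge>T. f t \<le> \<eta>"
proof (rule ccontr)
  assume "\<not> ?thesis"
  then have above: "\<And>t. t \<ge> T \<Longrightarrow> f t > \<eta>" by force
  define t where "t = T + \<bar>f T - \<eta>\<bar> / c + 1"
  have "T < t" using c by (simp add: t_def add_nonneg_pos)
  then obtain w where w: "T < w" "w < t" "f t - f T = (t - T) * f' w"
    using MVT2[of T t f f'] der by auto
  have "f' w \<le> - c" using slope[of w] above[of w] w by auto
  then have "(t - T) * f' w \<le> (t - T) * (- c)" using \<open>T < t\<close> by (intro mult_left_mono) auto
  also have "\<dots> = - \<bar>f T - \<eta>\<bar> - c" using c by (simp add: t_def field_simps)
  finally have "f t < \<eta>" using w(3) c by linarith
  then show False using above[of t] \<open>T < t\<close> by auto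
qed

lemma stays_below_level_of_deriv_neg:
  fixes f f' :: "real \<Rightarrow> real"
  assumes der: "\<And>t. t \<ge> t\<^sub>0 \<Longrightarrow> (f has_real_derivative f' t) (at t)"
    and start: "f t\<^sub>0 \<le> \<eta>"
    and slope: "\<And>t. t \<ge> t\<^sub>0 \<Longrightarrow> f t > \<eta> \<Longrightarrow> f' t < 0"
    and "t \<ge> t\<^sub>0"
  shows "f t \<le> \<eta>"
proof (rule ccontr)
  assume "\<not> f t \<le> \<eta>"
  define S where "S = {t\<^sub>0..t} \<inter> f -` {..\<eta>}"
  have "continuous_on {t\<^sub>0..t} f"
    using der by (intro continuous_at_imp_continuous_on ballI DERIV_isCont) auto
  then have "closed S" unfolding S_def by (rule continuous_closed_preimage) auto
  moreover have "S \<noteq> {}" using start \<open>t \<ge> t\<^sub>0\<close> unfolding S_def by auto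
  moreover have bdd: "bdd_above S" unfolding S_def by (rule bdd_aboveI[of _ t]) auto
  ultimately have "Sup S \<in> S" by (rule closed_contains_Sup[rotated 2])
  \<comment> \<open>\<open>Sup S\<close> is the last time before \<open>t\<close> at which \<open>f\<close> is at or below the level.\<close>
  then have s: "t\<^sub>0 \<le> Sup S" "Sup S < t" "f (Sup S) \<le> \<eta>"
    using \<open>\<not> f t \<le> \<eta>\<close> unfolding S_def by (auto simp: order.order_iff_strict)
  then obtain w where w: "Sup S < w" "w < t" "f t - f (Sup S) = (t - Sup S) * f' w"
    using MVT2[of "Sup S" t f f'] der by auto
  have "w \<notin> S" using cSup_upper[OF _ bdd, of w] w(1) by force
  then have "f' w < 0" using slope[of w] w s unfolding S_def by auto
  then have "(t - Sup S) * f' w < 0" using s(2) by (simp add: mult_pos_neg)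
  then show False using w(3) s(3) \<open>\<not> f t \<le> \<eta>\<close> by linarith
qed

lemma eventually_le_of_deriv_le_neg:
  fixes f f' :: "real \<Rightarrow> real"
  assumes der: "\<And>t. t \<ge> T \<Longrightarrow> (f has_real_derivative f' t) (at t)"
    and c: "c > 0"
    and slope: "\<And>t. t \<ge> T \<Longrightarrow> f t \<ge> \<eta> \<Longrightarrow> f' t \<le> - c"
  shows "\<forall>\<^sub>F t in at_top. f t \<le> \<eta>"
proof -
  obtain t\<^sub>0 where "t\<^sub>0 \<ge> T" "f t\<^sub>0 \<le> \<eta>"
    using reaches_level_of_deriv_le_neg[OF der c slope] by blast
  moreover have "f' t < 0" if "t \<ge> T" "f t > \<eta>" for t
    using slope[of t] c that by fastforce
  ultimately have "f t \<le> \<eta>" if "t \<ge> t\<^sub>0" for t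
    using der that by (intro stays_below_level_of_deriv_neg[of t\<^sub>0 f f' \<eta> t]) auto
  then show ?thesis unfolding eventually_at_top_linorder by blast
qed

lemma eventually_less_of_linear_ode:
  fixes v p q :: "real \<Rightarrow> real"
  assumes der: "\<forall>\<^sub>F t in at_top. (v has_real_derivative p t - q t * v t) (at t)"
    and p: "(p \<longlongrightarrow> P) at_top" and q: "(q \<longlongrightarrow> Q) at_top"
    and "Q > 0" and "P / Q < a"
  shows "\<forall>\<^sub>F t in at_top. v t < a"
proof -
  define m where "m = (P / Q + a) / 2"
  define c where "c = (Q * m - P) / 2"
  have "m < a" "c > 0"
    using \<open>Q > 0\<close> \<open>P / Q < a\<close> by (simp_all add: m_def c_def field_simps)
  have "((\<lambda>t. p t - q t * m) \<longlongrightarrow> P - Q * m) at_top" by (intro tendsto_intros p q)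
  moreover have "P - Q * m < - c" using \<open>c > 0\<close> by (simp add: c_def field_simps)
  ultimately have "\<forall>\<^sub>F t in at_top. p t - q t * m < - c" by (rule order_tendstoD)
  moreover have "\<forall>\<^sub>F t in at_top. q t > 0" using q \<open>Q > 0\<close> by (rule order_tendstoD)
  ultimately have "\<forall>\<^sub>F t in at_top.
      (v has_real_derivative p t - q t * v t) (at t) \<and> p t - q t * m < - c \<and> q t > 0"
    using der by eventually_elim blast
  then obtain T where T: "\<And>t. t \<ge> T \<Longrightarrow>
      (v has_real_derivative p t - q t * v t) (at t) \<and> p t - q t * m < - c \<and> q t > 0"
    unfolding eventually_at_top_linorder by blast
  then have "\<And>t. t \<ge> T \<Longrightarrow> (v has_real_derivative p t - q t * v t) (at t)" by blast
  moreover have "p t - q t * v t \<le> - c" if "t \<ge> T" "v t \<ge> m" for t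
  proof -
    have "q t * m \<le> q t * v t" using T[OF that(1)] that(2) by (intro mult_left_mono) auto
    then show ?thesis using T[OF that(1)] by linarith
  qed
  ultimately have "\<forall>\<^sub>F t in at_top. v t \<le> m"
    by (rule eventually_le_of_deriv_le_neg[OF _ \<open>c > 0\<close>])
  then show ?thesis by eventually_elim (use \<open>m < a\<close> in linarith)
qed

lemma tendsto_of_linear_ode:
  fixes v p q :: "real \<Rightarrow> real"
  assumes der: "\<forall>\<^sub>F t in at_top. (v has_real_derivative p t - q t * v t) (at t)"
    and p: "(p \<longlongrightarrow> P) at_top" and q: "(q \<longlongrightarrow> Q) at_top" and "Q > 0"
  shows "(v \<longlongrightarrow> P / Q) at_top"
proof (rule order_tendstoI)
  show "\<forall>\<^sub>F t in at_top. v t < a" if "P / Q < a" for a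
    using der p q \<open>Q > 0\<close> that by (rule eventually_less_of_linear_ode)
next
  fix a assume "a < P / Q"
  have "\<forall>\<^sub>F t in at_top. ((\<lambda>t. - v t) has_real_derivative - p t - q t * - v t) (at t)"
    using der by eventually_elim (auto intro: derivative_eq_intros)
  moreover have "((\<lambda>t. - p t) \<longlongrightarrow> - P) at_top" by (intro tendsto_intros p)
  moreover have "- P / Q < - a" using \<open>a < P / Q\<close> by simp
  ultimately have "\<forall>\<^sub>F t in at_top. - v t < - a"
    by (rule eventually_less_of_linear_ode[OF _ _ q \<open>Q > 0\<close>])
  then show "\<forall>\<^sub>F t in at_top. a < v t" by simp
qed

lemma has_real_derivative_ratio_of_ode:
  fixes y z :: "real \<Rightarrow> real" and N :: real
  assumes dy: "(y has_real_derivative y') (at t)" and dz: "(z has_real_derivative z') (at t)"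
    and "z t \<noteq> 0" and "N \<noteq> 0"
    and ode_y: "y' = (z t)\<^sup>2 * (N + 1 - y t) - N * y t"
    and ode_z: "z' = (N + 1) / N * z t * (N - 1 + y t) - (N + (z t)\<^sup>2) * z t"
  shows "((\<lambda>s. y s / (z s)\<^sup>2) has_real_derivative
      (N + 1 - y t) - ((N\<^sup>2 - 2) / N + 2 * (N + 1) * y t / N - 2 * (z t)\<^sup>2) * (y t / (z t)\<^sup>2)) (at t)"
proof -
  have "((\<lambda>s. y s / (z s)\<^sup>2) has_real_derivative
      (y' * (z t)\<^sup>2 - y t * (2 * z t * z')) / ((z t)\<^sup>2 * (z t)\<^sup>2)) (at t)"
    using dy dz \<open>z t \<noteq> 0\<close> by (auto intro!: derivative_eq_intros)
  moreover have "(y' * (z t)\<^sup>2 - y t * (2 * z t * z')) / ((z t)\<^sup>2 * (z t)\<^sup>2) =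
      (N + 1 - y t) - ((N\<^sup>2 - 2) / N + 2 * (N + 1) * y t / N - 2 * (z t)\<^sup>2) * (y t / (z t)\<^sup>2)"
    using \<open>z t \<noteq> 0\<close> \<open>N \<noteq> 0\<close> unfolding ode_y ode_z by (simp add: field_simps power2_eq_square)
  ultimately show ?thesis by simp
qed

theorem lemma3p8:
  fixes n :: nat and y z y' z' :: "real \<Rightarrow> real"
  assumes n2: "n \<ge> 2"
    and dy: "\<And>t. t \<ge> 0 \<Longrightarrow> (y has_real_derivative y' t) (at t within {0..})"
    and dz: "\<And>t. t \<ge> 0 \<Longrightarrow> (z has_real_derivative z' t) (at t within {0..})"
    and cy': "continuous_on {0..} y'"
    and cz': "continuous_on {0..} z'"
    and ypos: "\<And>t. t \<ge> 0 \<Longrightarrow> y t > 0"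
    and zpos: "\<And>t. t \<ge> 0 \<Longrightarrow> z t > 0"
    and ode_y: "\<And>t. t \<ge> 0 \<Longrightarrow> y' t = (z t)\<^sup>2 * (real n + 1 - y t) - real n * y t"
    and ode_z: "\<And>t. t \<ge> 0 \<Longrightarrow>
       z' t = (real n + 1) / real n * z t * (real n - 1 + y t) - (real n + (z t)\<^sup>2) * z t"
    and ylim: "(y \<longlongrightarrow> 0) at_top"
    and zlim: "(z \<longlongrightarrow> 0) at_top"
  shows "((\<lambda>t. (z t)\<^sup>2 / y t) \<longlongrightarrow> (real n ^ 2 - 2) / (real n * (real n + 1))) at_top"
proof -
  let ?N = "real n"
  have "(?N\<^sup>2 - 2) / ?N > 0" using n2 power_mono[of 2 ?N 2] by simp
  have "\<forall>\<^sub>F t in at_top. ((\<lambda>s. y s / (z s)\<^sup>2) has_real_derivative (?N + 1 - y t) -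
      ((?N\<^sup>2 - 2) / ?N + 2 * (?N + 1) * y t / ?N - 2 * (z t)\<^sup>2) * (y t / (z t)\<^sup>2)) (at t)"
    using eventually_gt_at_top[of 0]
  proof eventually_elim
    case (elim t)
    then have "t \<ge> 0" by simp
    have "at t within {0..} = at t" using elim by (intro at_within_interior) auto
    then have "(y has_real_derivative y' t) (at t)" "(z has_real_derivative z' t) (at t)"
      using dy[OF \<open>t \<ge> 0\<close>] dz[OF \<open>t \<ge> 0\<close>] by simp_all
    then show ?case using n2 zpos[OF \<open>t \<ge> 0\<close>]
      by (intro has_real_derivative_ratio_of_ode[where y' = "y' t" and z' = "z' t"]
          ode_y ode_z \<open>t \<ge> 0\<close>) auto
  qed
  moreover have "((\<lambda>t. ?N + 1 - y t) \<longlongrightarrow> ?N + 1) at_top"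
    using tendsto_diff[OF tendsto_const ylim] by simp
  moreover have "((\<lambda>t. (?N\<^sup>2 - 2) / ?N + 2 * (?N + 1) * y t / ?N - 2 * (z t)\<^sup>2)
      \<longlongrightarrow> (?N\<^sup>2 - 2) / ?N) at_top"
    using n2 by (auto intro!: tendsto_eq_intros ylim zlim)
  ultimately have "((\<lambda>t. y t / (z t)\<^sup>2) \<longlongrightarrow> (?N + 1) / ((?N\<^sup>2 - 2) / ?N)) at_top"
    using \<open>(?N\<^sup>2 - 2) / ?N > 0\<close> by (rule tendsto_of_linear_ode)
  then have "((\<lambda>t. inverse (y t / (z t)\<^sup>2)) \<longlongrightarrow> inverse ((?N + 1) / ((?N\<^sup>2 - 2) / ?N))) at_top"
    using \<open>(?N\<^sup>2 - 2) / ?N > 0\<close> n2 by (intro tendsto_inverse) auto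
  then show ?thesis by (simp add: field_simps)
qed

end
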